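(* If an $n$-agent network is $k$-redundant with $k\ge 1$, then $$\mathcal X^*=\bigcap_{i=1}^n\{x\in\mathbb R^d: A_i^\top A_ix=A_i^\top b_i\}.$$
   Context: An $n$-agent network: agents $\mathcal V=\{1,\dots,n\}$, each agent $i$ having real matrices $A_i\in\mathbb R^{r_i\times d}$, $b_i\in\mathbb R^{r_i}$; $A$, $b$ are the vertical stackings of the $A_i$, $b_i$, and $\mathcal X^*=\arg\min_x\|Ax-b\|_2^2=\arg\min_x\sum_{i=1}^n\|A_ix-b_i\|_2^2$. The network is $k$-redundant ($k\in\{0,1,\dots,n-1\}$) if for any $\mathcal S_1,\mathcal S_2\subset\mathcal V$ with $|\mathcal S_1|=|\mathcal S_2|=n-k$, $\arg\min_x\sum_{i\in\mathcal S_1}\|A_ix-b_i\|_2^2=\arg\min_x\sum_{i\in\mathcal S_2}\|A_ix-b_i\|_2^2$. *)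

theory Defs
  imports Complex_Main "Jordan_Normal_Form.Matrix"
begin

definition sqn :: "real vec \<Rightarrow> real" where
  "sqn v = v \<bullet> v"

definition cost :: "(nat \<Rightarrow> real mat) \<Rightarrow> (nat \<Rightarrow> real vec) \<Rightarrow> nat set \<Rightarrow> real vec \<Rightarrow> real" where
  "cost A b S x = (\<Sum>i\<in>S. sqn (A i *\<^sub>v x - b i))"

definition argmin_set :: "nat \<Rightarrow> (real vec \<Rightarrow> real) \<Rightarrow> real vec set" where
  "argmin_set d f = {x \<in> carrier_vec d. \<forall>y \<in> carrier_vec d. f x \<le> f y}"

definition k_redundant :: "nat \<Rightarrow> nat \<Rightarrow> (nat \<Rightarrow> real mat) \<Rightarrow> (nat \<Rightarrow> real vec) \<Rightarrow> nat \<Rightarrow> bool" where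
  "k_redundant n d A b k \<longleftrightarrow>
     (\<forall>S1 S2. S1 \<subseteq> {1..n} \<and> S2 \<subseteq> {1..n} \<and> card S1 = n - k \<and> card S2 = n - k \<longrightarrow>
        argmin_set d (cost A b S1) = argmin_set d (cost A b S2))"

end

theory Submission
  imports Defs
begin

text \<open>The cost of a group of agents is a convex quadratic, so its minimizers are exactly its
  stationary points; and a stationary point always exists, since stacking the agents of the group
  gives a single least-squares problem, which Gram--Schmidt on the columns solves.

  Let \<open>x0\<close> minimize the cost of the first \<open>n - k\<close> agents. By \<open>k\<close>-redundancy it minimizes the
  cost of every group of \<open>n - k\<close> agents, so the slopes \<open>(A\<^sub>i v) \<bullet> (A\<^sub>i x0 - b\<^sub>i)\<close> sum to zero
  over every such group. Since \<open>0 < n - k < n\<close>, exchanging one agent of a group for another shows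
  that all these slopes are equal, hence zero: \<open>x0\<close> is stationary for every single agent.
  Finally, if \<open>x\<close> minimizes the total cost, then \<open>w = x - x0\<close> satisfies
  \<open>\<Sum>\<^sub>i |A\<^sub>i w|\<^sup>2 = 0\<close>, so \<open>A\<^sub>i x = A\<^sub>i x0\<close> and \<open>x\<close> is stationary for every agent as well.\<close>

lemma sqn_nonneg: "0 \<le> sqn v"
  unfolding sqn_def using conjugate_square_ge_0_vec[of v] by simp

lemma sqn_eq_0_iff: "v \<in> carrier_vec n \<Longrightarrow> sqn v = 0 \<longleftrightarrow> v = 0\<^sub>v n"
  unfolding sqn_def using conjugate_square_eq_0_vec[of v n] by simp

lemma sqn_smult: "sqn (t \<cdot>\<^sub>v v) = t\<^sup>2 * sqn v"
  unfolding sqn_def by (simp add: scalar_prod_def sum_distrib_left power2_eq_square ac_simps)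

lemma orthogonal_to_all_iff_zero:
  fixes u :: "real vec"
  assumes "u \<in> carrier_vec n"
  shows "(\<forall>v\<in>carrier_vec n. v \<bullet> u = 0) \<longleftrightarrow> u = 0\<^sub>v n"
  using assms sqn_eq_0_iff[of u n] unfolding sqn_def by auto

lemma scalar_prod_mat_vec_transpose:
  fixes A :: "real mat"
  assumes "A \<in> carrier_mat r d" "v \<in> carrier_vec d" "w \<in> carrier_vec r"
  shows "(A *\<^sub>v v) \<bullet> w = v \<bullet> (transpose_mat A *\<^sub>v w)"
  using assms transpose_vec_mult_scalar[of A r d v w]
  by (metis comm_scalar_prod mult_mat_vec_carrier transpose_carrier_mat)

lemma linear_coeff_zero_if_quadratic_nonneg:
  fixes a c :: real
  assumes "0 \<le> c" and nonneg: "\<And>t. 0 \<le> 2 * t * a + t\<^sup>2 * c"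
  shows "a = 0"
proof -
  define s where "s = c + 1"
  have "0 < s" and "0 < 2 * s - c" using \<open>0 \<le> c\<close> unfolding s_def by simp_all
  have "s\<^sup>2 * (2 * (- a / s) * a + (- a / s)\<^sup>2 * c) = - a\<^sup>2 * (2 * s - c)"
    using \<open>0 < s\<close> by (simp add: field_simps power2_eq_square)
  moreover have "0 \<le> s\<^sup>2 * (2 * (- a / s) * a + (- a / s)\<^sup>2 * c)"
    using nonneg[of "- a / s"] by simp
  ultimately have "a\<^sup>2 * (2 * s - c) \<le> 0" by linarith
  with \<open>0 < 2 * s - c\<close> show ?thesis
    by (simp add: mult_le_0_iff)
qed

lemma sqn_residual_add:
  fixes A :: "real mat"
  assumes A: "A \<in> carrier_mat r d" and b: "b \<in> carrier_vec r"
    and x: "x \<in> carrier_vec d" and v: "v \<in> carrier_vec d"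
  shows "sqn (A *\<^sub>v (x + v) - b) = sqn (A *\<^sub>v x - b) + 2 * ((A *\<^sub>v v) \<bullet> (A *\<^sub>v x - b)) + sqn (A *\<^sub>v v)"
proof -
  define p q where "p = A *\<^sub>v x - b" and "q = A *\<^sub>v v"
  have p: "p \<in> carrier_vec r" and q: "q \<in> carrier_vec r"
    using A b x v unfolding p_def q_def by auto
  have "A *\<^sub>v (x + v) - b = p + q"
    unfolding p_def q_def using A b x v by (auto simp: mult_add_distrib_mat_vec)
  then have "sqn (A *\<^sub>v (x + v) - b) = p \<bullet> p + (p \<bullet> q + q \<bullet> p) + q \<bullet> q"
    unfolding sqn_def using p q by (simp add: add_scalar_prod_distrib[of _ r] scalar_prod_add_distrib[of _ r])
  also have "p \<bullet> q = q \<bullet> p" by (rule comm_scalar_prod[OF p q])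
  finally show ?thesis unfolding sqn_def p_def[symmetric] q_def[symmetric] by simp
qed

lemma cost_add:
  assumes dimA: "\<And>i. i \<in> S \<Longrightarrow> A i \<in> carrier_mat (r i) d"
    and dimb: "\<And>i. i \<in> S \<Longrightarrow> b i \<in> carrier_vec (r i)"
    and x: "x \<in> carrier_vec d" and v: "v \<in> carrier_vec d"
  shows "cost A b S (x + v) = cost A b S x + 2 * (\<Sum>i\<in>S. (A i *\<^sub>v v) \<bullet> (A i *\<^sub>v x - b i))
    + (\<Sum>i\<in>S. sqn (A i *\<^sub>v v))"
  unfolding cost_def sum_distrib_left sum.distrib[symmetric]
  using sqn_residual_add[OF dimA dimb x v] by (intro sum.cong) auto

lemma cost_add_smult:
  assumes dimA: "\<And>i. i \<in> S \<Longrightarrow> A i \<in> carrier_mat (r i) d"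
    and dimb: "\<And>i. i \<in> S \<Longrightarrow> b i \<in> carrier_vec (r i)"
    and x: "x \<in> carrier_vec d" and v: "v \<in> carrier_vec d"
  shows "cost A b S (x + t \<cdot>\<^sub>v v) = cost A b S x + 2 * t * (\<Sum>i\<in>S. (A i *\<^sub>v v) \<bullet> (A i *\<^sub>v x - b i))
    + t\<^sup>2 * (\<Sum>i\<in>S. sqn (A i *\<^sub>v v))"
proof -
  have "(\<Sum>i\<in>S. (A i *\<^sub>v (t \<cdot>\<^sub>v v)) \<bullet> (A i *\<^sub>v x - b i)) = t * (\<Sum>i\<in>S. (A i *\<^sub>v v) \<bullet> (A i *\<^sub>v x - b i))"
  proof (unfold sum_distrib_left, intro sum.cong[OF refl])
    fix i assume i: "i \<in> S"
    show "(A i *\<^sub>v (t \<cdot>\<^sub>v v)) \<bullet> (A i *\<^sub>v x - b i) = t * ((A i *\<^sub>v v) \<bullet> (A i *\<^sub>v x - b i))"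
      using mult_mat_vec[OF dimA[OF i] v] dimA[OF i] dimb[OF i] x v by simp
  qed
  moreover have "(\<Sum>i\<in>S. sqn (A i *\<^sub>v (t \<cdot>\<^sub>v v))) = t\<^sup>2 * (\<Sum>i\<in>S. sqn (A i *\<^sub>v v))"
    unfolding sum_distrib_left using mult_mat_vec[OF dimA v] by (simp add: sqn_smult)
  ultimately show ?thesis
    using cost_add[OF dimA dimb x, where v = "t \<cdot>\<^sub>v v"] v by simp
qed

text \<open>The slope of \<open>cost A b S\<close> at \<open>x\<close> in direction \<open>v\<close> is twice the sum below.\<close>

definition stationary ::
    "nat \<Rightarrow> (nat \<Rightarrow> real mat) \<Rightarrow> (nat \<Rightarrow> real vec) \<Rightarrow> nat set \<Rightarrow> real vec \<Rightarrow> bool" where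
  "stationary d A b S x \<longleftrightarrow>
     x \<in> carrier_vec d \<and> (\<forall>v\<in>carrier_vec d. (\<Sum>i\<in>S. (A i *\<^sub>v v) \<bullet> (A i *\<^sub>v x - b i)) = 0)"

lemma argmin_cost_iff_stationary:
  assumes dimA: "\<And>i. i \<in> S \<Longrightarrow> A i \<in> carrier_mat (r i) d"
    and dimb: "\<And>i. i \<in> S \<Longrightarrow> b i \<in> carrier_vec (r i)"
  shows "x \<in> argmin_set d (cost A b S) \<longleftrightarrow> stationary d A b S x"
proof
  assume xmin: "x \<in> argmin_set d (cost A b S)"
  then have x: "x \<in> carrier_vec d" unfolding argmin_set_def by simp
  have "(\<Sum>i\<in>S. (A i *\<^sub>v v) \<bullet> (A i *\<^sub>v x - b i)) = 0" if v: "v \<in> carrier_vec d" for v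
  proof (rule linear_coeff_zero_if_quadratic_nonneg)
    show "0 \<le> (\<Sum>i\<in>S. sqn (A i *\<^sub>v v))" by (intro sum_nonneg sqn_nonneg)
    fix t :: real
    have "cost A b S x \<le> cost A b S (x + t \<cdot>\<^sub>v v)"
      using xmin x v unfolding argmin_set_def by auto
    then show "0 \<le> 2 * t * (\<Sum>i\<in>S. (A i *\<^sub>v v) \<bullet> (A i *\<^sub>v x - b i)) + t\<^sup>2 * (\<Sum>i\<in>S. sqn (A i *\<^sub>v v))"
      using cost_add_smult[OF dimA dimb x v, where t = t] by simp
  qed
  with x show "stationary d A b S x" unfolding stationary_def by blast
next
  assume "stationary d A b S x"
  then have x: "x \<in> carrier_vec d"
    and slope: "\<And>v. v \<in> carrier_vec d \<Longrightarrow> (\<Sum>i\<in>S. (A i *\<^sub>v v) \<bullet> (A i *\<^sub>v x - b i)) = 0"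
    unfolding stationary_def by auto
  have "cost A b S x \<le> cost A b S y" if y: "y \<in> carrier_vec d" for y
  proof -
    have "y = x + (y - x)" using x y by auto
    then have "cost A b S y = cost A b S x + (\<Sum>i\<in>S. sqn (A i *\<^sub>v (y - x)))"
      using cost_add[OF dimA dimb x, where v = "y - x"] slope[of "y - x"] x y by simp
    then show ?thesis by (simp add: sum_nonneg sqn_nonneg)
  qed
  with x show "x \<in> argmin_set d (cost A b S)" unfolding argmin_set_def by blast
qed

lemma stationary_singleton_iff:
  assumes dimA: "A i \<in> carrier_mat r d" and dimb: "b i \<in> carrier_vec r"
  shows "stationary d A b {i} x \<longleftrightarrow>
    x \<in> carrier_vec d \<and> transpose_mat (A i) *\<^sub>v (A i *\<^sub>v x) = transpose_mat (A i) *\<^sub>v b i"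
proof (cases "x \<in> carrier_vec d")
  case x: True
  let ?g = "transpose_mat (A i) *\<^sub>v (A i *\<^sub>v x - b i)"
  have g: "?g \<in> carrier_vec d" using dimA dimb x by auto
  have "?g = transpose_mat (A i) *\<^sub>v (A i *\<^sub>v x) - transpose_mat (A i) *\<^sub>v b i"
    using dimA dimb x by (simp add: mult_minus_distrib_mat_vec[of _ d r])
  then have "?g = 0\<^sub>v d \<longleftrightarrow> transpose_mat (A i) *\<^sub>v (A i *\<^sub>v x) = transpose_mat (A i) *\<^sub>v b i"
    using dimA dimb x by (auto simp: vec_eq_iff)
  moreover have "(A i *\<^sub>v v) \<bullet> (A i *\<^sub>v x - b i) = v \<bullet> ?g" if "v \<in> carrier_vec d" for v
    using dimA dimb x that by (intro scalar_prod_mat_vec_transpose) auto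
  ultimately show ?thesis
    using orthogonal_to_all_iff_zero[OF g] x unfolding stationary_def by simp
qed (simp add: stationary_def)

lemma mat_vec_scalar_prod_eq_0_if_orthogonal_cols:
  fixes M :: "real mat"
  assumes M: "M \<in> carrier_mat r d" and y: "y \<in> carrier_vec d" and w: "w \<in> carrier_vec r"
    and orth: "\<And>j. j < d \<Longrightarrow> y $ j \<noteq> 0 \<Longrightarrow> col M j \<bullet> w = 0"
  shows "(M *\<^sub>v y) \<bullet> w = 0"
proof -
  have "(M *\<^sub>v y) \<bullet> w = y \<bullet> (transpose_mat M *\<^sub>v w)"
    using M y w by (rule scalar_prod_mat_vec_transpose)
  also have "\<dots> = (\<Sum>j<d. y $ j * (col M j \<bullet> w))"
    using M y w unfolding scalar_prod_def[of y] by (auto intro: sum.cong)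
  also have "\<dots> = 0"
    using orth by (intro sum.neutral) auto
  finally show ?thesis .
qed

lemma mult_mat_unit_vec:
  "(M :: 'a :: semiring_1 mat) \<in> carrier_mat r d \<Longrightarrow> j < d \<Longrightarrow> M *\<^sub>v unit_vec d j = col M j"
  by (intro eq_vecI) auto

lemma scalar_prod_minus_projection:
  fixes e u :: "real vec"
  assumes e: "e \<in> carrier_vec n" and u: "u \<in> carrier_vec n"
  shows "e \<bullet> (u - ((e \<bullet> u) / (e \<bullet> e)) \<cdot>\<^sub>v e) = 0"
proof (cases "e = 0\<^sub>v n")
  case False
  then have "e \<bullet> e \<noteq> 0" using sqn_eq_0_iff[OF e] unfolding sqn_def by simp
  then show ?thesis using e u by (simp add: scalar_prod_minus_distrib[of _ n])
qed (use u in simp)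

definition partial_lsq_solution :: "real mat \<Rightarrow> real vec \<Rightarrow> nat \<Rightarrow> real vec \<Rightarrow> bool" where
  "partial_lsq_solution M c m x \<longleftrightarrow> x \<in> carrier_vec (dim_col M) \<and>
     (\<forall>j<dim_col M. x $ j \<noteq> 0 \<longrightarrow> j < m) \<and> (\<forall>j<m. col M j \<bullet> (M *\<^sub>v x - c) = 0)"

text \<open>A Gram--Schmidt step: \<open>M q\<close> is the projection of column \<open>m\<close> onto the earlier columns, so
  \<open>e\<close> is orthogonal to them, and the residual of \<open>x\<close> is corrected by its projection onto \<open>e\<close>
  (if \<open>e = 0\<close> then \<open>t = 0\<close>, as division by zero yields zero).\<close>

lemma partial_lsq_solution_Suc:
  fixes M :: "real mat"
  assumes M: "M \<in> carrier_mat r d" and c: "c \<in> carrier_vec r" and "m < d"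
    and x: "partial_lsq_solution M c m x"
    and q: "partial_lsq_solution M (col M m) m q"
  defines "e \<equiv> M *\<^sub>v q - col M m"
  defines "t \<equiv> (e \<bullet> (M *\<^sub>v x - c)) / (e \<bullet> e)"
  shows "partial_lsq_solution M c (Suc m) (x - t \<cdot>\<^sub>v (q - unit_vec d m))"
proof -
  have x_carrier: "x \<in> carrier_vec d" and x_supp: "\<forall>j<d. x $ j \<noteq> 0 \<longrightarrow> j < m"
    and x_orth: "\<forall>j<m. col M j \<bullet> (M *\<^sub>v x - c) = 0"
    using x M unfolding partial_lsq_solution_def by auto
  have q_carrier: "q \<in> carrier_vec d" and q_supp: "\<forall>j<d. q $ j \<noteq> 0 \<longrightarrow> j < m"
    and e_orth: "\<forall>j<m. col M j \<bullet> e = 0"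
    using q M unfolding partial_lsq_solution_def e_def by auto
  define u where "u = M *\<^sub>v x - c"
  have col_m: "col M m \<in> carrier_vec r" using M \<open>m < d\<close> by simp
  have e: "e \<in> carrier_vec r" and u: "u \<in> carrier_vec r" and res: "u - t \<cdot>\<^sub>v e \<in> carrier_vec r"
    using M q_carrier x_carrier c col_m unfolding e_def u_def by auto
  have residual: "M *\<^sub>v (x - t \<cdot>\<^sub>v (q - unit_vec d m)) - c = u - t \<cdot>\<^sub>v e"
    unfolding u_def e_def using M x_carrier q_carrier c \<open>m < d\<close>
    by (auto simp: vec_eq_iff mult_minus_distrib_mat_vec mult_mat_vec mult_mat_unit_vec)
  have orth_below: "col M j \<bullet> (u - t \<cdot>\<^sub>v e) = 0" if "j < m" for j
  proof -
    have "col M j \<in> carrier_vec r" using M by auto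
    then show ?thesis
      using x_orth e_orth that u e by (simp add: u_def[symmetric] scalar_prod_minus_distrib[of _ r])
  qed
  have "col M m \<bullet> (u - t \<cdot>\<^sub>v e) = (M *\<^sub>v q) \<bullet> (u - t \<cdot>\<^sub>v e) - e \<bullet> (u - t \<cdot>\<^sub>v e)"
    using M q_carrier col_m res by (simp add: e_def minus_scalar_prod_distrib[of _ r])
  also have "(M *\<^sub>v q) \<bullet> (u - t \<cdot>\<^sub>v e) = 0"
    using M q_carrier res q_supp orth_below by (intro mat_vec_scalar_prod_eq_0_if_orthogonal_cols) auto
  also have "e \<bullet> (u - t \<cdot>\<^sub>v e) = 0"
    unfolding t_def u_def[symmetric] using e u by (rule scalar_prod_minus_projection)
  finally have orth_m: "col M m \<bullet> (u - t \<cdot>\<^sub>v e) = 0" by simp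
  have "j < Suc m" if "j < d" "(x - t \<cdot>\<^sub>v (q - unit_vec d m)) $ j \<noteq> 0" for j
  proof (rule ccontr)
    assume "\<not> j < Suc m"
    then have "x $ j = 0" "q $ j = 0" "unit_vec d m $ j = 0" using that x_supp q_supp by auto
    then show False using that x_carrier q_carrier by auto
  qed
  moreover have "col M j \<bullet> (u - t \<cdot>\<^sub>v e) = 0" if "j < Suc m" for j
    using that orth_below orth_m by (cases "j = m") auto
  ultimately show ?thesis
    using M x_carrier q_carrier unfolding partial_lsq_solution_def residual by auto
qed

lemma exists_partial_lsq_solution:
  fixes M :: "real mat"
  assumes M: "M \<in> carrier_mat r d" and "c \<in> carrier_vec r" and "m \<le> d"
  shows "\<exists>x. partial_lsq_solution M c m x"
  using assms(2,3)
proof (induction m arbitrary: c)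
  case 0
  have "partial_lsq_solution M c 0 (0\<^sub>v d)" using M unfolding partial_lsq_solution_def by auto
  then show ?case ..
next
  case (Suc m)
  then have "m < d" by simp
  then have "col M m \<in> carrier_vec r" using M by simp
  with Suc obtain x q where "partial_lsq_solution M c m x" "partial_lsq_solution M (col M m) m q"
    by (meson Suc_leD)
  then show ?case using partial_lsq_solution_Suc[OF M Suc.prems(1) \<open>m < d\<close>] by blast
qed

lemma exists_least_squares_stationary:
  fixes M :: "real mat"
  assumes M: "M \<in> carrier_mat r d" and c: "c \<in> carrier_vec r"
  shows "\<exists>x\<in>carrier_vec d. \<forall>v\<in>carrier_vec d. (M *\<^sub>v v) \<bullet> (M *\<^sub>v x - c) = 0"
proof -
  obtain x where "partial_lsq_solution M c d x"
    using exists_partial_lsq_solution[OF M c order.refl] by blast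
  then have x: "x \<in> carrier_vec d" and orth: "\<forall>j<d. col M j \<bullet> (M *\<^sub>v x - c) = 0"
    using M unfolding partial_lsq_solution_def by auto
  have "(M *\<^sub>v v) \<bullet> (M *\<^sub>v x - c) = 0" if "v \<in> carrier_vec d" for v
    using M x c that orth by (intro mat_vec_scalar_prod_eq_0_if_orthogonal_cols) auto
  with x show ?thesis by blast
qed

fun stack_mat :: "nat \<Rightarrow> ('i \<Rightarrow> 'a :: zero mat) \<Rightarrow> 'i list \<Rightarrow> 'a mat" where
  "stack_mat d A [] = 0\<^sub>m 0 d"
| "stack_mat d A (i # is) = A i @\<^sub>r stack_mat d A is"

fun stack_vec :: "('i \<Rightarrow> 'a :: zero vec) \<Rightarrow> 'i list \<Rightarrow> 'a vec" where
  "stack_vec b [] = 0\<^sub>v 0"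
| "stack_vec b (i # is) = b i @\<^sub>v stack_vec b is"

lemma stack_carrier:
  assumes "\<forall>i\<in>set is. A i \<in> carrier_mat (r i) d \<and> b i \<in> carrier_vec (r i)"
  shows "stack_mat d A is \<in> carrier_mat (\<Sum>i\<leftarrow>is. r i) d \<and> stack_vec b is \<in> carrier_vec (\<Sum>i\<leftarrow>is. r i)"
  using assms by (induction "is") auto

lemma append_vec_minus:
  assumes "v \<in> carrier_vec n" "v' \<in> carrier_vec n" "w \<in> carrier_vec m" "w' \<in> carrier_vec m"
  shows "(v @\<^sub>v w) - (v' @\<^sub>v w') = (v - v') @\<^sub>v (w - w')"
  using assms by (intro eq_vecI) auto

lemma scalar_prod_stack:
  fixes A :: "'i \<Rightarrow> real mat"
  assumes dims: "\<forall>i\<in>set is. A i \<in> carrier_mat (r i) d \<and> b i \<in> carrier_vec (r i)"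
    and x: "x \<in> carrier_vec d" and v: "v \<in> carrier_vec d"
  shows "(stack_mat d A is *\<^sub>v v) \<bullet> (stack_mat d A is *\<^sub>v x - stack_vec b is)
    = (\<Sum>i\<leftarrow>is. (A i *\<^sub>v v) \<bullet> (A i *\<^sub>v x - b i))"
  using dims
proof (induction "is")
  case (Cons i "is")
  then have A: "A i \<in> carrier_mat (r i) d" and b: "b i \<in> carrier_vec (r i)"
    and M: "stack_mat d A is \<in> carrier_mat (\<Sum>i\<leftarrow>is. r i) d"
    and c: "stack_vec b is \<in> carrier_vec (\<Sum>i\<leftarrow>is. r i)"
    using stack_carrier[of "is" A r d b] by auto
  have res: "stack_mat d A (i # is) *\<^sub>v x - stack_vec b (i # is)
      = (A i *\<^sub>v x - b i) @\<^sub>v (stack_mat d A is *\<^sub>v x - stack_vec b is)"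
    unfolding stack_mat.simps stack_vec.simps mat_mult_append[OF A M x]
    by (rule append_vec_minus) (use A M b c x in auto)
  have img: "stack_mat d A (i # is) *\<^sub>v v = (A i *\<^sub>v v) @\<^sub>v (stack_mat d A is *\<^sub>v v)"
    using mat_mult_append[OF A M v] by simp
  have "(stack_mat d A (i # is) *\<^sub>v v) \<bullet> (stack_mat d A (i # is) *\<^sub>v x - stack_vec b (i # is))
      = (A i *\<^sub>v v) \<bullet> (A i *\<^sub>v x - b i) + (stack_mat d A is *\<^sub>v v) \<bullet> (stack_mat d A is *\<^sub>v x - stack_vec b is)"
    unfolding res img using A M b c x v by (intro scalar_prod_append[of _ "r i" _ "\<Sum>i\<leftarrow>is. r i"]) auto
  then show ?case using Cons by simp
qed (simp add: scalar_prod_def)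

lemma exists_stationary:
  assumes "finite S"
    and dimA: "\<And>i. i \<in> S \<Longrightarrow> A i \<in> carrier_mat (r i) d"
    and dimb: "\<And>i. i \<in> S \<Longrightarrow> b i \<in> carrier_vec (r i)"
  shows "\<exists>x. stationary d A b S x"
proof -
  define "is" where "is = sorted_list_of_set S"
  have set_is: "set is = S" and "distinct is" using \<open>finite S\<close> unfolding is_def by auto
  have dims: "\<forall>i\<in>set is. A i \<in> carrier_mat (r i) d \<and> b i \<in> carrier_vec (r i)"
    using dimA dimb set_is by auto
  have M: "stack_mat d A is \<in> carrier_mat (\<Sum>i\<leftarrow>is. r i) d"
    and c: "stack_vec b is \<in> carrier_vec (\<Sum>i\<leftarrow>is. r i)"
    using stack_carrier[OF dims] by auto
  obtain x where x: "x \<in> carrier_vec d" and slope: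
    "\<forall>v\<in>carrier_vec d. (stack_mat d A is *\<^sub>v v) \<bullet> (stack_mat d A is *\<^sub>v x - stack_vec b is) = 0"
    using exists_least_squares_stationary[OF M c] by blast
  have "stationary d A b S x"
    unfolding stationary_def
    using x slope scalar_prod_stack[OF dims x]
    by (simp add: sum_list_distinct_conv_sum_set[OF \<open>distinct is\<close>] set_is)
  then show ?thesis ..
qed

lemma stationary_iff_stationary_each:
  assumes "finite S"
    and dimA: "\<And>i. i \<in> S \<Longrightarrow> A i \<in> carrier_mat (r i) d"
    and dimb: "\<And>i. i \<in> S \<Longrightarrow> b i \<in> carrier_vec (r i)"
    and x0: "\<And>i. i \<in> S \<Longrightarrow> stationary d A b {i} x0"
  shows "stationary d A b S x \<longleftrightarrow> x \<in> carrier_vec d \<and> (\<forall>i\<in>S. stationary d A b {i} x)"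
proof
  assume x: "stationary d A b S x"
  have "stationary d A b {i} x" if i: "i \<in> S" for i
  proof -
    have x_carrier: "x \<in> carrier_vec d" and x0_carrier: "x0 \<in> carrier_vec d"
      using x x0[OF i] unfolding stationary_def by auto
    define w where "w = x - x0"
    have w: "w \<in> carrier_vec d" and x_eq: "x = x0 + w"
      unfolding w_def using x_carrier x0_carrier by auto
    \<comment> \<open>Since \<open>x0\<close> is stationary for each agent, the slopes at \<open>x\<close> only see the offset \<open>w\<close>.\<close>
    have slope: "(A j *\<^sub>v v) \<bullet> (A j *\<^sub>v x - b j) = (A j *\<^sub>v v) \<bullet> (A j *\<^sub>v w)"
      if j: "j \<in> S" and v: "v \<in> carrier_vec d" for j v
    proof -
      have "A j *\<^sub>v x - b j = (A j *\<^sub>v x0 - b j) + A j *\<^sub>v w"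
        unfolding x_eq using dimA[OF j] dimb[OF j] x0_carrier w
        by (auto simp: vec_eq_iff mult_add_distrib_mat_vec)
      then have "(A j *\<^sub>v v) \<bullet> (A j *\<^sub>v x - b j)
          = (A j *\<^sub>v v) \<bullet> (A j *\<^sub>v x0 - b j) + (A j *\<^sub>v v) \<bullet> (A j *\<^sub>v w)"
        using dimA[OF j] dimb[OF j] x0_carrier w v by (simp add: scalar_prod_add_distrib[of _ "r j"])
      then show ?thesis using x0[OF j] v unfolding stationary_def by simp
    qed
    have "(\<Sum>j\<in>S. sqn (A j *\<^sub>v w)) = 0"
      using x w slope unfolding stationary_def sqn_def by simp
    then have "sqn (A i *\<^sub>v w) = 0"
      using \<open>finite S\<close> i by (simp add: sum_nonneg_eq_0_iff sqn_nonneg)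
    then have "A i *\<^sub>v w = 0\<^sub>v (r i)"
      using sqn_eq_0_iff dimA[OF i] w by (meson mult_mat_vec_carrier)
    then show ?thesis
      using slope[OF i] dimA[OF i] x_carrier unfolding stationary_def by simp
  qed
  with x show "x \<in> carrier_vec d \<and> (\<forall>i\<in>S. stationary d A b {i} x)"
    unfolding stationary_def by blast
qed (simp add: stationary_def)

lemma eq_0_if_sums_over_subsets_of_card_eq_0:
  fixes f :: "'a \<Rightarrow> 'b :: {idom, ring_char_0}"
  assumes "finite V" and "0 < m" and "m < card V"
    and sums: "\<And>S. S \<subseteq> V \<Longrightarrow> card S = m \<Longrightarrow> sum f S = 0"
    and i: "i \<in> V"
  shows "f i = 0"
proof -
  have insert_sum: "sum f (insert j T) = 0"
    if "j \<in> V" "T \<subseteq> V - {j}" "card T = m - 1" for j T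
  proof (rule sums)
    have "finite T" using \<open>finite V\<close> that(2) finite_subset by blast
    then show "card (insert j T) = m" using that \<open>0 < m\<close> by (subst card_insert_disjoint) auto
  qed (use that in auto)
  have same: "f j = f i" if j: "j \<in> V" "j \<noteq> i" for j
  proof -
    have "m - 1 \<le> card (V - {i, j})"
      using \<open>finite V\<close> \<open>m < card V\<close> i j by (simp add: card_Diff_subset)
    then obtain T where T: "T \<subseteq> V - {i, j}" "card T = m - 1"
      by (meson obtain_subset_with_card_n)
    then have "T \<subseteq> V - {i}" "T \<subseteq> V - {j}" "i \<notin> T" "j \<notin> T" and "finite T"
      using \<open>finite V\<close> finite_subset by auto
    then have "f j + sum f T = f i + sum f T"
      using insert_sum[of j T] insert_sum[of i T] i j T by simp
    then show ?thesis by simp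
  qed
  have "m - 1 \<le> card (V - {i})" using \<open>finite V\<close> \<open>m < card V\<close> i by simp
  then obtain T where T: "T \<subseteq> V - {i}" "card T = m - 1"
    by (meson obtain_subset_with_card_n)
  have "of_nat m * f i = sum f (insert i T)"
  proof -
    have "finite T" using \<open>finite V\<close> T(1) finite_subset by blast
    then have "sum f (insert i T) = sum (\<lambda>_. f i) (insert i T)"
      using same T(1) i by (intro sum.cong) auto
    also have "\<dots> = of_nat m * f i" using \<open>finite T\<close> T \<open>0 < m\<close> by (auto simp: card_insert_if)
    finally show ?thesis by simp
  qed
  with insert_sum[OF i T] \<open>0 < m\<close> show ?thesis by simp
qed

lemma stationary_singleton_if_stationary_on_subsets:
  assumes "finite V" and "0 < m" and "m < card V"
    and stat: "\<And>S. S \<subseteq> V \<Longrightarrow> card S = m \<Longrightarrow> stationary d A b S x"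
    and i: "i \<in> V"
  shows "stationary d A b {i} x"
proof -
  obtain S where "S \<subseteq> V" "card S = m"
    using \<open>m < card V\<close> obtain_subset_with_card_n[of m V] by auto
  then have "x \<in> carrier_vec d" using stat unfolding stationary_def by blast
  moreover have "(A i *\<^sub>v v) \<bullet> (A i *\<^sub>v x - b i) = 0" if v: "v \<in> carrier_vec d" for v
  proof (rule eq_0_if_sums_over_subsets_of_card_eq_0
      [where f = "\<lambda>j. (A j *\<^sub>v v) \<bullet> (A j *\<^sub>v x - b j)" and V = V and m = m])
    show "(\<Sum>j\<in>S. (A j *\<^sub>v v) \<bullet> (A j *\<^sub>v x - b j)) = 0" if "S \<subseteq> V" "card S = m" for S
      using stat[OF that] v unfolding stationary_def by blast
  qed (use assms in auto)
  ultimately show ?thesis unfolding stationary_def by simp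
qed

lemma exists_stationary_each_if_k_redundant:
  assumes dimA: "\<And>i. i \<in> {1..n} \<Longrightarrow> A i \<in> carrier_mat (r i) d"
    and dimb: "\<And>i. i \<in> {1..n} \<Longrightarrow> b i \<in> carrier_vec (r i)"
    and "1 \<le> k" and "k \<le> n - 1" and red: "k_redundant n d A b k"
  shows "\<exists>x0. \<forall>i\<in>{1..n}. stationary d A b {i} x0"
proof -
  define m where "m = n - k"
  have "0 < m" "m < n" "card {1..m} = n - k" using assms(3,4) unfolding m_def by auto
  have argmin_iff: "x \<in> argmin_set d (cost A b S) \<longleftrightarrow> stationary d A b S x" if "S \<subseteq> {1..n}" for S x
    using dimA dimb that by (intro argmin_cost_iff_stationary[where r = r]) auto
  have "\<And>i. i \<in> {1..m} \<Longrightarrow> A i \<in> carrier_mat (r i) d"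
    and "\<And>i. i \<in> {1..m} \<Longrightarrow> b i \<in> carrier_vec (r i)"
    using dimA dimb \<open>m < n\<close> by auto
  then obtain x0 where "stationary d A b {1..m} x0"
    using exists_stationary[of "{1..m}"] by blast
  then have x0_min: "x0 \<in> argmin_set d (cost A b {1..m})"
    using argmin_iff[of "{1..m}"] \<open>m < n\<close> by simp
  have "stationary d A b S x0" if S: "S \<subseteq> {1..n}" "card S = m" for S
  proof -
    have "card S = n - k" "{1..m} \<subseteq> {1..n}" using S(2) \<open>m < n\<close> unfolding m_def by auto
    then have "argmin_set d (cost A b S) = argmin_set d (cost A b {1..m})"
      using red S(1) \<open>card {1..m} = n - k\<close> unfolding k_redundant_def by blast
    then show ?thesis using x0_min argmin_iff[OF S(1)] by simp
  qed
  then have "\<forall>i\<in>{1..n}. stationary d A b {i} x0"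
    using \<open>0 < m\<close> \<open>m < n\<close> by (intro ballI stationary_singleton_if_stationary_on_subsets[where V = "{1..n}" and m = m]) auto
  then show ?thesis ..
qed

theorem proposition1:
  fixes n d k :: nat and r :: "nat \<Rightarrow> nat"
    and A :: "nat \<Rightarrow> real mat" and b :: "nat \<Rightarrow> real vec"
  assumes dimA: "\<And>i. i \<in> {1..n} \<Longrightarrow> A i \<in> carrier_mat (r i) d"
    and dimb: "\<And>i. i \<in> {1..n} \<Longrightarrow> b i \<in> carrier_vec (r i)"
    and k_le: "k \<le> n - 1"
    and k_ge: "k \<ge> 1"
    and red: "k_redundant n d A b k"
  shows "argmin_set d (cost A b {1..n}) =
         {x \<in> carrier_vec d. \<forall>i \<in> {1..n}.
            transpose_mat (A i) *\<^sub>v (A i *\<^sub>v x) = transpose_mat (A i) *\<^sub>v b i}"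
proof -
  obtain x0 where x0: "\<And>i. i \<in> {1..n} \<Longrightarrow> stationary d A b {i} x0"
    using exists_stationary_each_if_k_redundant[OF dimA dimb k_ge k_le red] by blast
  have "x \<in> argmin_set d (cost A b {1..n}) \<longleftrightarrow>
      x \<in> carrier_vec d \<and> (\<forall>i\<in>{1..n}. stationary d A b {i} x)" for x
    using argmin_cost_iff_stationary[where S = "{1..n}", OF dimA dimb]
      stationary_iff_stationary_each[where S = "{1..n}", OF _ dimA dimb x0] by simp
  moreover have "stationary d A b {i} x \<longleftrightarrow>
      x \<in> carrier_vec d \<and> transpose_mat (A i) *\<^sub>v (A i *\<^sub>v x) = transpose_mat (A i) *\<^sub>v b i"
    if "i \<in> {1..n}" for i x
    using stationary_singleton_iff[where A = A and b = b, OF dimA[OF that] dimb[OF that]] .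
  ultimately show ?thesis by auto
qed

end
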